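(* Let $g$ be self-neglecting and let $f\in\Gamma_\alpha(g)$. (i) If $g$ is ultimately decreasing and $\alpha<0$, then $f$ is tail equivalent (i.e. $f(t)/\tilde f(t)\to1$ as $t\to\infty$) to a function $\tilde f$ that is ultimately decreasing. (ii) If $g$ is ultimately increasing and $\alpha>0$, then $f$ is tail equivalent to a function that is ultimately increasing.
   Context: For $\alpha\in\mathbb{R}$ and a positive measurable function $g$, an ultimately positive measurable function $f:\mathbb{R}\to\mathbb{R}$ belongs to $\Gamma_\alpha(g)$ if $\lim_{t\to\infty} f(t+xg(t))/f(t)=e^{\alpha x}$ for all $x\in\mathbb{R}$. A measurable $g:\mathbb{R}\to(0,\infty)$ is self-neglecting if $g(t)/t\to0$ and $g(t+xg(t))/g(t)\to1$ locally uniformly in $x\in\mathbb{R}$ as $t\to\infty$. *)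

theory Defs
  imports "HOL-Analysis.Analysis"
begin

definition self_neglecting :: "(real \<Rightarrow> real) \<Rightarrow> bool" where
  "self_neglecting g \<longleftrightarrow>
     g \<in> borel_measurable borel \<and> (\<forall>t. g t > 0) \<and>
     ((\<lambda>t. g t / t) \<longlongrightarrow> 0) at_top \<and>
     (\<forall>a b. \<forall>e>0. eventually (\<lambda>t. \<forall>x\<in>{a..b}. \<bar>g (t + x * g t) / g t - 1\<bar> < e) at_top)"

definition Gamma :: "real \<Rightarrow> (real \<Rightarrow> real) \<Rightarrow> (real \<Rightarrow> real) set" where
  "Gamma \<alpha> g = {f. f \<in> borel_measurable borel \<and> eventually (\<lambda>t. f t > 0) at_top \<and>
     (\<forall>x. ((\<lambda>t. f (t + x * g t) / f t) \<longlongrightarrow> exp (\<alpha> * x)) at_top)}"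

definition ult_decreasing :: "(real \<Rightarrow> real) \<Rightarrow> bool" where
  "ult_decreasing h \<longleftrightarrow> (\<exists>T. \<forall>s t. T \<le> s \<longrightarrow> s \<le> t \<longrightarrow> h t \<le> h s)"

definition ult_increasing :: "(real \<Rightarrow> real) \<Rightarrow> bool" where
  "ult_increasing h \<longleftrightarrow> (\<exists>T. \<forall>s t. T \<le> s \<longrightarrow> s \<le> t \<longrightarrow> h s \<le> h t)"

definition tail_equivalent :: "(real \<Rightarrow> real) \<Rightarrow> (real \<Rightarrow> real) \<Rightarrow> bool" where
  "tail_equivalent f h \<longleftrightarrow> ((\<lambda>t. f t / h t) \<longlongrightarrow> 1) at_top"

end

theory Submission
  imports Defs
begin

text \<open>Write \<open>\<phi> = ln f\<close>, so that \<open>\<phi> (t + x g t) - \<phi> t \<rightarrow> \<alpha> x\<close>. A measure argument in the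
  spirit of the uniform convergence theorem (two subsets of \<open>[0,2]\<close> of total measure more than 2
  must meet) shows that for every \<open>e > 0\<close> there is \<open>\<delta> > 0\<close> with
  \<open>\<bar>\<phi> (t + x g t) - \<phi> t\<bar> < e\<close> for all \<open>x \<in> [0,\<delta>]\<close> and all large \<open>t\<close>. If \<open>\<alpha> < 0\<close>, the steps
  \<open>c \<mapsto> c + \<delta> g c\<close> eventually do not increase \<open>\<phi>\<close>, and monotonicity of \<open>g\<close> keeps their length
  bounded below on compact intervals; so every \<open>s \<ge> t\<close> lies within one step of a point \<open>c\<close>
  with \<open>\<phi> c \<le> \<phi> t\<close>, whence \<open>\<phi> s < \<phi> t + e\<close>. Then \<open>\<phi>\<close> differs by \<open>o(1)\<close> from its decreasing
  tail supremum, and \<open>h\<close> is the exponential of the latter. For \<open>\<alpha> > 0\<close> apply this to \<open>-\<phi>\<close>.\<close>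

lemma tendsto_measure_pointwise_eventually:
  assumes S: "S \<in> fmeasurable M"
    and sets: "\<And>n. {u\<in>S. P n u} \<in> sets M"
    and pointwise: "\<And>u. u \<in> S \<Longrightarrow> eventually (\<lambda>n. P n u) sequentially"
  shows "(\<lambda>n. measure M {u\<in>S. P n u}) \<longlonglongrightarrow> measure M S"
proof (rule real_tendsto_sandwich)
  define E where "E N = (\<Inter>n. {u\<in>S. N \<le> n \<longrightarrow> P n u})" for N
  have E_sets: "E N \<in> sets M" for N
  proof -
    have "{u\<in>S. N \<le> n \<longrightarrow> P n u} = (if N \<le> n then {u\<in>S. P n u} else S)" for n
      by auto
    then show ?thesis
      unfolding E_def using S sets by (intro sets.countable_INT) auto
  qed
  have Union_E: "(\<Union>N. E N) = S"
    using pointwise by (fastforce simp: E_def eventually_sequentially)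
  have "incseq E"
    unfolding incseq_def E_def by force
  then have "(\<lambda>N. measure M (E N)) \<longlonglongrightarrow> measure M (\<Union>N. E N)"
    by (intro Lim_measure_incseq) (use E_sets S Union_E in \<open>auto simp: fmeasurable_def\<close>)
  then show "(\<lambda>N. measure M (E N)) \<longlonglongrightarrow> measure M S"
    by (simp only: Union_E)
  have fmeasurable: "{u\<in>S. P n u} \<in> fmeasurable M" for n
    by (rule fmeasurableI2[OF S _ sets]) blast
  have "E n \<subseteq> {u\<in>S. P n u}" for n
    unfolding E_def by blast
  then show "eventually (\<lambda>n. measure M (E n) \<le> measure M {u\<in>S. P n u}) sequentially"
    using E_sets fmeasurable by (intro always_eventually allI measure_mono_fmeasurable)
  show "eventually (\<lambda>n. measure M {u\<in>S. P n u} \<le> measure M S) sequentially"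
    using S sets by (intro always_eventually allI measure_mono_fmeasurable) auto
qed (rule tendsto_const)

lemma Int_nonempty_if_measure_add_gt:
  assumes S: "S \<in> fmeasurable M" and A: "A \<in> sets M" "A \<subseteq> S" and C: "C \<subseteq> S"
    and gt: "measure M A + measure M C > measure M S"
  shows "A \<inter> C \<noteq> {}"
proof
  assume "A \<inter> C = {}"
  with C have "C \<subseteq> S - A"
    by blast
  then have "emeasure M C \<le> emeasure M (S - A)"
    using S A by (intro emeasure_mono) auto
  moreover have "S - A \<in> fmeasurable M"
    using S A by (intro fmeasurableI2[OF S]) auto
  ultimately have "measure M C \<le> measure M (S - A)"
    unfolding measure_def by (intro enn2real_mono) (auto simp: fmeasurable_def)
  also have "\<dots> = measure M S - measure M A"
    using S A by (intro measure_Diff) (auto simp: fmeasurable_def)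
  finally show False
    using gt by linarith
qed

lemma affine_image_meets:
  fixes A Q :: "real set"
  assumes "A \<in> sets lebesgue" "A \<subseteq> {a..b}" "(\<lambda>w. x + r * w) ` Q \<subseteq> {a..b}" "a \<le> b"
    and "measure lebesgue A + \<bar>r\<bar> * measure lebesgue Q > b - a"
  shows "\<exists>w\<in>Q. x + r * w \<in> A"
proof -
  have "(\<lambda>w. x + r * w) ` Q = (\<lambda>w. r *\<^sub>R w + x) ` Q"
    by (simp add: add.commute)
  then have "measure lebesgue ((\<lambda>w. x + r * w) ` Q) = \<bar>r\<bar> * measure lebesgue Q"
    using measure_lebesgue_affine[of r x Q] by simp
  then have "A \<inter> (\<lambda>w. x + r * w) ` Q \<noteq> {}"
    using assms by (intro Int_nonempty_if_measure_add_gt[of "{a..b}"]) auto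
  then show ?thesis
    by blast
qed

lemma self_neglecting_ratio_sequentially:
  assumes "self_neglecting g" and t: "filterlim t at_top sequentially"
    and x: "x \<longlonglongrightarrow> 0" and x_nonneg: "\<And>n. 0 \<le> x n"
  shows "(\<lambda>n. g (t n + x n * g (t n)) / g (t n)) \<longlonglongrightarrow> 1"
proof (rule tendstoI)
  fix e :: real
  assume "e > 0"
  with assms(1) have "eventually (\<lambda>t. \<forall>y\<in>{0..1}. \<bar>g (t + y * g t) / g t - 1\<bar> < e) at_top"
    by (auto simp: self_neglecting_def)
  then have "eventually (\<lambda>n. \<forall>y\<in>{0..1}. \<bar>g (t n + y * g (t n)) / g (t n) - 1\<bar> < e) sequentially"
    using filterlim_iff[THEN iffD1, OF t] by blast
  moreover have "eventually (\<lambda>n. x n < 1) sequentially"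
    using order_tendstoD(2)[OF x] by simp
  ultimately show "eventually (\<lambda>n. dist (g (t n + x n * g (t n)) / g (t n)) 1 < e) sequentially"
    by eventually_elim (use x_nonneg in \<open>auto simp: dist_real_def\<close>)
qed

definition asymp_decreasing :: "(real \<Rightarrow> real) \<Rightarrow> bool" where
  "asymp_decreasing \<phi> \<longleftrightarrow> (\<forall>e>0. \<exists>T. \<forall>t\<ge>T. \<forall>s\<ge>t. \<phi> s < \<phi> t + e)"

lemma asymp_decreasing_tail_Sup:
  assumes "asymp_decreasing \<phi>"
  shows "ult_decreasing (\<lambda>t. Sup (\<phi> ` {t..}))"
    and "((\<lambda>t. Sup (\<phi> ` {t..}) - \<phi> t) \<longlongrightarrow> 0) at_top"
proof -
  obtain T1 where T1: "\<And>t s. T1 \<le> t \<Longrightarrow> t \<le> s \<Longrightarrow> \<phi> s < \<phi> t + 1"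
    using assms unfolding asymp_decreasing_def by (meson zero_less_one)
  have bdd: "bdd_above (\<phi> ` {t..})" if "T1 \<le> t" for t
    using T1[OF that] by (intro bdd_aboveI2[of _ _ "\<phi> t + 1"]) (auto intro: less_imp_le)
  have upper: "\<phi> t \<le> Sup (\<phi> ` {t..})" if "T1 \<le> t" for t
    using bdd[OF that] by (intro cSup_upper) auto
  show "ult_decreasing (\<lambda>t. Sup (\<phi> ` {t..}))"
    unfolding ult_decreasing_def using bdd by (intro exI[of _ T1] allI impI cSup_subset_mono) auto
  show "((\<lambda>t. Sup (\<phi> ` {t..}) - \<phi> t) \<longlongrightarrow> 0) at_top"
  proof (rule tendstoI)
    fix e :: real
    assume "e > 0"
    then obtain T where T: "\<And>t s. T \<le> t \<Longrightarrow> t \<le> s \<Longrightarrow> \<phi> s < \<phi> t + e / 2"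
      using assms unfolding asymp_decreasing_def by (meson half_gt_zero)
    have "Sup (\<phi> ` {t..}) \<le> \<phi> t + e / 2" if "T \<le> t" for t
      using T[OF that] by (intro cSup_least) (auto intro: less_imp_le)
    then show "eventually (\<lambda>t. dist (Sup (\<phi> ` {t..}) - \<phi> t) 0 < e) at_top"
      unfolding eventually_at_top_linorder dist_real_def
      using upper \<open>e > 0\<close> by (intro exI[of _ "max T T1"]) force
  qed
qed

lemma step_overshoot:
  fixes d :: "real \<Rightarrow> real"
  assumes m: "m > 0" and step_ge: "\<And>c. c \<in> {T..s} \<Longrightarrow> m \<le> d c"
    and invariant: "\<And>c. c \<in> {T..s} \<Longrightarrow> P c \<Longrightarrow> P (c + d c)"
    and "T \<le> t" "t \<le> s" "P t"
  shows "\<exists>c\<in>{t..s}. P c \<and> s < c + d c"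
proof -
  have "\<exists>c\<in>{t..s}. P c \<and> s < c + d c"
    if "T \<le> t" "t \<le> s" "P t" "s - t < real k * m" for k t
    using that
  proof (induction k arbitrary: t)
    case 0
    then show ?case by simp
  next
    case (Suc k)
    show ?case
    proof (cases "s < t + d t")
      case True
      with Suc.prems show ?thesis by auto
    next
      case False
      with Suc.prems step_ge[of t] invariant[of t] m
      have "T \<le> t + d t" "t + d t \<le> s" "P (t + d t)" "s - (t + d t) < real k * m"
        by (auto simp: algebra_simps)
      with Suc.IH obtain c where "c \<in> {t + d t..s}" "P c" "s < c + d c"
        by blast
      with Suc.prems step_ge[of t] m show ?thesis
        by auto
    qed
  qed
  moreover obtain k where "s - t < real k * m"
    using reals_Archimedean3[OF m] by blast
  ultimately show ?thesis
    using assms by blast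
qed

lemma tail_equivalent_exp:
  assumes "eventually (\<lambda>t. f t > 0) at_top" and "((\<lambda>t. \<psi> t - ln (f t)) \<longlongrightarrow> 0) at_top"
  shows "tail_equivalent f (\<lambda>t. exp (\<psi> t))"
proof -
  have "((\<lambda>t. exp (- (\<psi> t - ln (f t)))) \<longlongrightarrow> exp (- 0)) at_top"
    by (intro tendsto_intros assms(2))
  moreover have "eventually (\<lambda>t. exp (- (\<psi> t - ln (f t))) = f t / exp (\<psi> t)) at_top"
    using assms(1) by eventually_elim (simp add: exp_diff)
  ultimately show ?thesis
    unfolding tail_equivalent_def using Lim_transform_eventually by fastforce
qed

lemma ult_monotone_bounded_below:
  assumes pos: "\<And>t. g t > 0" and mono: "ult_decreasing g \<or> ult_increasing g"
  shows "\<exists>T. \<forall>s. \<exists>m>0. \<forall>c\<in>{T..s}. m \<le> g c"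
  using mono
proof
  assume "ult_decreasing g"
  then obtain T where "\<And>s t. T \<le> s \<Longrightarrow> s \<le> t \<Longrightarrow> g t \<le> g s"
    unfolding ult_decreasing_def by blast
  then have "\<forall>c\<in>{T..s}. g s \<le> g c" for s
    by auto
  then show ?thesis
    using pos by blast
next
  assume "ult_increasing g"
  then obtain T where "\<And>s t. T \<le> s \<Longrightarrow> s \<le> t \<Longrightarrow> g s \<le> g t"
    unfolding ult_increasing_def by blast
  then have "\<forall>c\<in>{T..s}. g T \<le> g c" for s
    by auto
  then show ?thesis
    using pos by blast
qed

lemma exists_decreasing_tail_equivalent:
  assumes "eventually (\<lambda>t. f t > 0) at_top" and "asymp_decreasing (\<lambda>t. ln (f t))"
  shows "\<exists>h. tail_equivalent f h \<and> ult_decreasing h"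
proof -
  define \<psi> where "\<psi> t = Sup ((\<lambda>t. ln (f t)) ` {t..})" for t
  have "ult_decreasing \<psi>" and "((\<lambda>t. \<psi> t - ln (f t)) \<longlongrightarrow> 0) at_top"
    unfolding \<psi>_def using asymp_decreasing_tail_Sup[OF assms(2)] by auto
  then show ?thesis
    using tail_equivalent_exp[OF assms(1)]
    by (intro exI[of _ "\<lambda>t. exp (\<psi> t)"]) (auto simp: ult_decreasing_def)
qed

lemma exists_increasing_tail_equivalent:
  assumes "eventually (\<lambda>t. f t > 0) at_top" and "asymp_decreasing (\<lambda>t. - ln (f t))"
  shows "\<exists>h. tail_equivalent f h \<and> ult_increasing h"
proof -
  define \<psi> where "\<psi> t = Sup ((\<lambda>t. - ln (f t)) ` {t..})" for t
  have "ult_decreasing \<psi>" and "((\<lambda>t. \<psi> t - - ln (f t)) \<longlongrightarrow> 0) at_top"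
    unfolding \<psi>_def using asymp_decreasing_tail_Sup[OF assms(2)] by auto
  then have "ult_increasing (\<lambda>t. exp (- \<psi> t))" and "((\<lambda>t. - \<psi> t - ln (f t)) \<longlongrightarrow> 0) at_top"
    using tendsto_minus[of "\<lambda>t. \<psi> t - - ln (f t)" 0]
    by (auto simp: ult_decreasing_def ult_increasing_def)
  then show ?thesis
    using tail_equivalent_exp[OF assms(1), of "\<lambda>t. - \<psi> t"] by blast
qed

locale additive_Gamma =
  fixes \<phi> g :: "real \<Rightarrow> real" and \<alpha> :: real
  assumes self_neglecting: "self_neglecting g"
    and measurable [measurable]: "\<phi> \<in> borel_measurable borel"
    and increments: "\<And>x. x \<ge> 0 \<Longrightarrow> ((\<lambda>t. \<phi> (t + x * g t) - \<phi> t) \<longlongrightarrow> \<alpha> * x) at_top"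
begin

lemma g_pos: "g t > 0"
  using self_neglecting by (simp add: self_neglecting_def)

lemma uminus: "additive_Gamma (\<lambda>t. - \<phi> t) g (- \<alpha>)"
proof
  fix x :: real
  assume "x \<ge> 0"
  from tendsto_minus[OF increments[OF this]]
  show "((\<lambda>t. - \<phi> (t + x * g t) - - \<phi> t) \<longlongrightarrow> - \<alpha> * x) at_top"
    by simp
qed (use self_neglecting in simp_all)

definition near_linear :: "real \<Rightarrow> real \<Rightarrow> real \<Rightarrow> real set" where
  "near_linear \<eta> b t = {u\<in>{0..b}. \<bar>\<phi> (t + u * g t) - \<phi> t - \<alpha> * u\<bar> < \<eta>}"

lemma near_linear_sets: "near_linear \<eta> b t \<in> sets lebesgue"
proof -
  have "near_linear \<eta> b t \<in> sets borel"
    unfolding near_linear_def by measurable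
  then show ?thesis
    by simp
qed

lemma measure_near_linear_tendsto:
  assumes t: "filterlim t at_top sequentially" and "\<eta> > 0" "b \<ge> 0"
  shows "(\<lambda>n. measure lebesgue (near_linear \<eta> b (t n))) \<longlonglongrightarrow> b"
proof -
  have "(\<lambda>n. measure lebesgue (near_linear \<eta> b (t n))) \<longlonglongrightarrow> measure lebesgue {0..b}"
    unfolding near_linear_def
  proof (rule tendsto_measure_pointwise_eventually)
    show "{0..b} \<in> fmeasurable lebesgue"
      using \<open>b \<ge> 0\<close> by (simp add: fmeasurable_def)
    show "{u\<in>{0..b}. \<bar>\<phi> (t n + u * g (t n)) - \<phi> (t n) - \<alpha> * u\<bar> < \<eta>} \<in> sets lebesgue" for n
      using near_linear_sets by (simp add: near_linear_def)
    fix u :: real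
    assume "u \<in> {0..b}"
    then have "((\<lambda>n. \<phi> (t n + u * g (t n)) - \<phi> (t n)) \<longlongrightarrow> \<alpha> * u) sequentially"
      using filterlim_compose[OF increments t] by simp
    from tendstoD[OF this \<open>\<eta> > 0\<close>]
    show "eventually (\<lambda>n. \<bar>\<phi> (t n + u * g (t n)) - \<phi> (t n) - \<alpha> * u\<bar> < \<eta>) sequentially"
      by (simp add: dist_real_def)
  qed
  then show ?thesis
    using \<open>b \<ge> 0\<close> by simp
qed

text \<open>With \<open>r = g s / g t\<close>, the point \<open>t + (x + r w) g t\<close> equals \<open>s + w g s\<close>. So the image of
  \<open>near_linear \<eta> 1 s\<close> under \<open>w \<mapsto> x + r w\<close> and \<open>near_linear \<eta> 2 t\<close>, having total measure more
  than 2 inside \<open>[0,2]\<close>, share a point at which both linear approximations of \<open>\<phi>\<close> hold.\<close>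

lemma increment_bound_if_near_linear_large:
  assumes large: "7/4 < measure lebesgue (near_linear \<eta> 2 t)"
      "3/4 < measure lebesgue (near_linear \<eta> 1 s)"
    and s: "s = t + x * g t" and x: "0 \<le> x" "x < 1/2"
    and ratio: "1/2 < g s / g t" "g s / g t < 3/2"
  shows "\<bar>\<phi> s - \<phi> t\<bar> < 2 * \<eta> + \<bar>\<alpha>\<bar> * (x + \<bar>g s / g t - 1\<bar>)"
proof -
  define r where "r = g s / g t"
  have r: "1/2 < r" "r < 3/2"
    using ratio by (simp_all add: r_def)
  have "(\<lambda>w. x + r * w) ` near_linear \<eta> 1 s \<subseteq> {0..2}"
  proof clarify
    fix w
    assume "w \<in> near_linear \<eta> 1 s"
    then have "r * w \<le> r" "0 \<le> r * w"
      using r by (auto simp: near_linear_def mult_left_le)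
    then show "x + r * w \<in> {0..2}"
      unfolding atLeastAtMost_iff using x r by linarith
  qed
  moreover have "1/2 * (3/4) < \<bar>r\<bar> * measure lebesgue (near_linear \<eta> 1 s)"
    using r large by (intro mult_strict_mono) auto
  ultimately have "\<exists>w\<in>near_linear \<eta> 1 s. x + r * w \<in> near_linear \<eta> 2 t"
    using large near_linear_sets
    by (intro affine_image_meets[of _ 0 2]) (auto simp: near_linear_def)
  then obtain w where w: "w \<in> near_linear \<eta> 1 s" and u: "x + r * w \<in> near_linear \<eta> 2 t"
    by blast
  have same_point: "t + (x + r * w) * g t = s + w * g s"
    using g_pos[of t] by (simp add: r_def s field_simps)
  have "\<bar>(r - 1) * w\<bar> \<le> \<bar>r - 1\<bar>"
    using w by (simp add: near_linear_def abs_mult mult_left_le)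
  then have "\<bar>x + (r - 1) * w\<bar> \<le> x + \<bar>r - 1\<bar>"
    using abs_triangle_ineq[of x "(r - 1) * w"] x by simp
  then have "\<bar>\<alpha>\<bar> * \<bar>x + (r - 1) * w\<bar> \<le> \<bar>\<alpha>\<bar> * (x + \<bar>r - 1\<bar>)"
    by (rule mult_left_mono) simp
  then have "\<bar>\<alpha> * (x + r * w) - \<alpha> * w\<bar> \<le> \<bar>\<alpha>\<bar> * (x + \<bar>r - 1\<bar>)"
    by (simp add: abs_mult[symmetric] algebra_simps)
  moreover have "\<bar>\<phi> (s + w * g s) - \<phi> t - \<alpha> * (x + r * w)\<bar> < \<eta>"
    using u by (simp add: near_linear_def flip: same_point)
  moreover have "\<bar>\<phi> (s + w * g s) - \<phi> s - \<alpha> * w\<bar> < \<eta>"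
    using w by (simp add: near_linear_def)
  ultimately show ?thesis
    unfolding r_def[symmetric] by (auto simp: abs_less_iff abs_le_iff)
qed

lemma increments_tendsto_zero_sequentially:
  assumes t: "filterlim t at_top sequentially"
    and x: "x \<longlonglongrightarrow> 0" and x_nonneg: "\<And>n. 0 \<le> x n"
  shows "(\<lambda>n. \<phi> (t n + x n * g (t n)) - \<phi> (t n)) \<longlonglongrightarrow> 0"
proof (rule tendstoI)
  fix \<epsilon> :: real
  assume "\<epsilon> > 0"
  define \<eta> where "\<eta> = \<epsilon> / 3"
  have "\<eta> > 0"
    using \<open>\<epsilon> > 0\<close> by (simp add: \<eta>_def)
  define s where "s n = t n + x n * g (t n)" for n
  define r where "r n = g (s n) / g (t n)" for n
  have "0 \<le> x n * g (t n)" for n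
    using x_nonneg[of n] g_pos[of "t n"] by simp
  then have s: "filterlim s at_top sequentially"
    by (intro filterlim_at_top_mono[OF t] always_eventually) (simp add: s_def)
  have r: "r \<longlonglongrightarrow> 1"
    unfolding r_def s_def using self_neglecting t x x_nonneg
    by (rule self_neglecting_ratio_sequentially)
  have "(\<lambda>n. \<bar>\<alpha>\<bar> * (x n + \<bar>r n - 1\<bar>)) \<longlonglongrightarrow> \<bar>\<alpha>\<bar> * (0 + \<bar>1 - 1\<bar>)"
    by (intro tendsto_intros x r)
  then have "eventually (\<lambda>n. 7/4 < measure lebesgue (near_linear \<eta> 2 (t n))
      \<and> 3/4 < measure lebesgue (near_linear \<eta> 1 (s n))
      \<and> \<bar>\<alpha>\<bar> * (x n + \<bar>r n - 1\<bar>) < \<eta> \<and> 1/2 < r n \<and> r n < 3/2 \<and> x n < 1/2) sequentially"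
    using \<open>\<eta> > 0\<close>
    by (intro eventually_conj order_tendstoD[OF r] order_tendstoD(2)[OF x]
          order_tendstoD(1)[OF measure_near_linear_tendsto[OF t]]
          order_tendstoD(1)[OF measure_near_linear_tendsto[OF s]]
          order_tendstoD(2)[of "\<lambda>n. \<bar>\<alpha>\<bar> * (x n + \<bar>r n - 1\<bar>)"]) auto
  then show "eventually (\<lambda>n. dist (\<phi> (t n + x n * g (t n)) - \<phi> (t n)) 0 < \<epsilon>) sequentially"
  proof eventually_elim
    case (elim n)
    then have "\<bar>\<phi> (s n) - \<phi> (t n)\<bar> < 2 * \<eta> + \<bar>\<alpha>\<bar> * (x n + \<bar>r n - 1\<bar>)"
      unfolding r_def using x_nonneg s_def by (intro increment_bound_if_near_linear_large) auto
    with elim show ?case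
      by (simp add: dist_real_def \<eta>_def s_def)
  qed
qed

lemma uniformly_small_increments:
  assumes "\<epsilon> > 0"
  shows "\<exists>\<delta>>0. eventually (\<lambda>t. \<forall>x\<in>{0..\<delta>}. \<bar>\<phi> (t + x * g t) - \<phi> t\<bar> < \<epsilon>) at_top"
proof (rule ccontr)
  assume "\<not> ?thesis"
  then have "\<forall>n. \<exists>t\<ge>real n. \<exists>x\<in>{0..inverse (real (Suc n))}. \<epsilon> \<le> \<bar>\<phi> (t + x * g t) - \<phi> t\<bar>"
    unfolding eventually_at_top_linorder
    by (metis inverse_positive_iff_positive not_less of_nat_0_less_iff zero_less_Suc)
  then obtain t x where t: "\<And>n. real n \<le> t n" and x: "\<And>n. x n \<in> {0..inverse (real (Suc n))}"
    and large: "\<And>n. \<epsilon> \<le> \<bar>\<phi> (t n + x n * g (t n)) - \<phi> (t n)\<bar>"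
    by metis
  have "filterlim t at_top sequentially"
    using t by (intro filterlim_at_top_mono[OF filterlim_real_sequentially]) auto
  moreover have "x \<longlonglongrightarrow> 0"
    using x by (intro real_tendsto_sandwich[OF _ _ tendsto_const LIMSEQ_inverse_real_of_nat]) auto
  ultimately have "(\<lambda>n. \<phi> (t n + x n * g (t n)) - \<phi> (t n)) \<longlonglongrightarrow> 0"
    using x by (intro increments_tendsto_zero_sequentially) auto
  from tendstoD[OF this \<open>\<epsilon> > 0\<close>] obtain n where "\<bar>\<phi> (t n + x n * g (t n)) - \<phi> (t n)\<bar> < \<epsilon>"
    by (auto simp: eventually_sequentially dist_real_def)
  with large[of n] show False
    by simp
qed

lemma asymp_decreasing_if_negative:
  assumes "\<alpha> < 0" and "ult_decreasing g \<or> ult_increasing g"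
  shows "asymp_decreasing \<phi>"
  unfolding asymp_decreasing_def
proof (intro allI impI)
  fix e :: real
  assume "e > 0"
  obtain T\<^sub>g where bounded_below: "\<And>s. \<exists>m>0. \<forall>c\<in>{T\<^sub>g..s}. m \<le> g c"
    using ult_monotone_bounded_below[OF g_pos assms(2)] by blast
  from \<open>e > 0\<close> obtain \<delta> where "\<delta> > 0"
    and small: "eventually (\<lambda>t. \<forall>x\<in>{0..\<delta>}. \<bar>\<phi> (t + x * g t) - \<phi> t\<bar> < e) at_top"
    using uniformly_small_increments by blast
  have "eventually (\<lambda>t. \<phi> (t + \<delta> * g t) - \<phi> t < 0) at_top"
    using \<open>\<alpha> < 0\<close> \<open>\<delta> > 0\<close> by (intro order_tendstoD(2)[OF increments]) (auto simp: mult_neg_pos)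
  with small obtain T where T: "\<And>c. T \<le> c \<Longrightarrow>
      (\<forall>x\<in>{0..\<delta>}. \<bar>\<phi> (c + x * g c) - \<phi> c\<bar> < e) \<and> \<phi> (c + \<delta> * g c) - \<phi> c < 0"
    unfolding eventually_at_top_linorder by (meson max.boundedE nle_le)
  show "\<exists>T. \<forall>t\<ge>T. \<forall>s\<ge>t. \<phi> s < \<phi> t + e"
  proof (intro exI allI impI)
    fix t s
    assume t: "max T T\<^sub>g \<le> t" and "t \<le> s"
    obtain m where "m > 0" and m: "\<forall>c\<in>{T\<^sub>g..s}. m \<le> g c"
      using bounded_below by blast
    have "\<exists>c\<in>{t..s}. \<phi> c \<le> \<phi> t \<and> s < c + \<delta> * g c"
      using t \<open>t \<le> s\<close> \<open>\<delta> > 0\<close> \<open>m > 0\<close> m T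
      by (intro step_overshoot[where T = "max T T\<^sub>g" and m = "\<delta> * m"]) force+
    then obtain c where c: "t \<le> c" "c \<le> s" "\<phi> c \<le> \<phi> t" "s < c + \<delta> * g c"
      by auto
    define x where "x = (s - c) / g c"
    have "s = c + x * g c" and "x \<in> {0..\<delta>}"
      using c g_pos[of c] by (auto simp: x_def field_simps)
    moreover have "T \<le> c"
      using c t by simp
    ultimately have "\<bar>\<phi> s - \<phi> c\<bar> < e"
      using bspec[OF conjunct1[OF T]] by simp
    with c show "\<phi> s < \<phi> t + e"
      by (simp add: abs_less_iff)
  qed
qed

end

lemma Gamma_imp_additive_Gamma:
  assumes "self_neglecting g" and "f \<in> Gamma \<alpha> g"
  shows "additive_Gamma (\<lambda>t. ln (f t)) g \<alpha>"
proof
  have [measurable]: "f \<in> borel_measurable borel" and f_pos: "eventually (\<lambda>t. f t > 0) at_top"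
    and f_lim: "\<And>x. ((\<lambda>t. f (t + x * g t) / f t) \<longlongrightarrow> exp (\<alpha> * x)) at_top"
    using assms(2) by (auto simp: Gamma_def)
  show "self_neglecting g" by fact
  show "(\<lambda>t. ln (f t)) \<in> borel_measurable borel"
    by measurable
  fix x :: real
  assume "x \<ge> 0"
  have "((\<lambda>t. ln (f (t + x * g t) / f t)) \<longlongrightarrow> ln (exp (\<alpha> * x))) at_top"
    by (intro tendsto_ln f_lim) simp
  moreover have "filterlim (\<lambda>t. t + x * g t) at_top at_top"
    using \<open>x \<ge> 0\<close> assms(1)
    by (intro filterlim_at_top_mono[OF filterlim_ident] always_eventually)
       (auto simp: self_neglecting_def less_imp_le)
  then have "eventually (\<lambda>t. f (t + x * g t) > 0 \<and> f t > 0) at_top"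
    using f_pos eventually_compose_filterlim[OF f_pos] by (simp add: eventually_conj_iff)
  then have "eventually (\<lambda>t. ln (f (t + x * g t) / f t) = ln (f (t + x * g t)) - ln (f t)) at_top"
    by eventually_elim (simp add: ln_div)
  ultimately show "((\<lambda>t. ln (f (t + x * g t)) - ln (f t)) \<longlongrightarrow> \<alpha> * x) at_top"
    by (simp add: tendsto_cong)
qed

theorem mainTheorem8:
  fixes g f :: "real \<Rightarrow> real" and \<alpha> :: real
  assumes "self_neglecting g" and "f \<in> Gamma \<alpha> g"
  shows "(ult_decreasing g \<and> \<alpha> < 0 \<longrightarrow> (\<exists>h. tail_equivalent f h \<and> ult_decreasing h))
       \<and> (ult_increasing g \<and> \<alpha> > 0 \<longrightarrow> (\<exists>h. tail_equivalent f h \<and> ult_increasing h))"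
proof -
  interpret additive_Gamma "\<lambda>t. ln (f t)" g \<alpha>
    using assms by (rule Gamma_imp_additive_Gamma)
  have f_pos: "eventually (\<lambda>t. f t > 0) at_top"
    using assms(2) by (simp add: Gamma_def)
  show ?thesis
  proof (intro conjI impI)
    assume "ult_decreasing g \<and> \<alpha> < 0"
    then have "asymp_decreasing (\<lambda>t. ln (f t))"
      by (intro asymp_decreasing_if_negative) auto
    with f_pos show "\<exists>h. tail_equivalent f h \<and> ult_decreasing h"
      by (rule exists_decreasing_tail_equivalent)
  next
    assume "ult_increasing g \<and> \<alpha> > 0"
    then have "asymp_decreasing (\<lambda>t. - ln (f t))"
      by (intro additive_Gamma.asymp_decreasing_if_negative[OF uminus]) auto
    with f_pos show "\<exists>h. tail_equivalent f h \<and> ult_increasing h"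
      by (rule exists_increasing_tail_equivalent)
  qed
qed

end
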